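(* Let $M,N\in\Lambda_\bot^{001}$ be such that neither $M$ nor $N$ contains a subterm of the form $\lambda x.\bot$ or $(\bot)P$. If $\mathcal T(M)=\mathcal T(N)$ then $M=N$.
   Context: $\Lambda_\bot^{001}$: possibly infinite trees built from variables, a constant $\bot$, abstractions $\lambda x.M$ and applications $(M)N$, whose infinite branches all enter infinitely often the argument position $N$ of an application, up to α-equivalence. Resource terms: $s::=x\mid\lambda x.s\mid\langle s\rangle\bar t$, with $\bar t=[t_1,\dots,t_n]$ a finite multiset of resource terms. Taylor approximation $\ltimes$ is defined inductively: $x\ltimes x$; $s\ltimes M\Rightarrow\lambda x.s\ltimes\lambda x.M$; ($s\ltimes M$ and $t_i\ltimes N$ for all $1\le i\le n$) $\Rightarrow\langle s\rangle[t_1,\dots,t_n]\ltimes(M)N$; no resource term approximates $\bot$. $\mathcal T(M)=\{s : s\ltimes M\}$. *)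

theory Defs
  imports Main "HOL-Library.Multiset"
begin

text \<open>Possibly infinite lambda-trees with bottom, in de Bruijn notation
(so that alpha-equivalence becomes syntactic equality).\<close>
codatatype lterm = Var nat | Bot | Lam lterm | App lterm lterm

datatype dir = DLam | DFun | DArg

fun step :: "dir \<Rightarrow> lterm \<Rightarrow> lterm option" where
  "step DLam M = (case M of Lam P \<Rightarrow> Some P | _ \<Rightarrow> None)"
| "step DFun M = (case M of App P Q \<Rightarrow> Some P | _ \<Rightarrow> None)"
| "step DArg M = (case M of App P Q \<Rightarrow> Some Q | _ \<Rightarrow> None)"

primrec subterm_at :: "lterm \<Rightarrow> dir list \<Rightarrow> lterm option" where
  "subterm_at M [] = Some M"
| "subterm_at M (d # p) = (case step d M of None \<Rightarrow> None | Some P \<Rightarrow> subterm_at P p)"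

definition infinite_branch :: "lterm \<Rightarrow> (nat \<Rightarrow> dir) \<Rightarrow> bool" where
  "infinite_branch M f \<longleftrightarrow> (\<forall>n. subterm_at M (map f [0..<n]) \<noteq> None)"

definition Lambda001 :: "lterm set" where
  "Lambda001 = {M. \<forall>f. infinite_branch M f \<longrightarrow> infinite {i. f i = DArg}}"

datatype rterm = RVar nat | RLam rterm | RApp rterm "rterm multiset"

inductive taylor_approx :: "rterm \<Rightarrow> lterm \<Rightarrow> bool" where
  tvar: "taylor_approx (RVar x) (Var x)"
| tlam: "taylor_approx s M \<Longrightarrow> taylor_approx (RLam s) (Lam M)"
| tapp: "taylor_approx s M \<Longrightarrow> (\<forall>t\<in>#ts. taylor_approx t N) \<Longrightarrow>
         taylor_approx (RApp s ts) (App M N)"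

definition taylor :: "lterm \<Rightarrow> rterm set" where
  "taylor M = {s. taylor_approx s M}"

definition no_bot_redex :: "lterm \<Rightarrow> bool" where
  "no_bot_redex M \<longleftrightarrow> (\<forall>p. subterm_at M p \<noteq> Some (Lam Bot) \<and>
                              (\<forall>P. subterm_at M p \<noteq> Some (App Bot P)))"

end

theory Submission
  imports Defs
begin

text \<open>A term of \<open>\<Lambda>\<^sub>\<bottom>\<^sup>0\<^sup>0\<^sup>1\<close> without \<open>\<lambda>x.\<bottom>\<close> and \<open>(\<bottom>)P\<close> has an approximant unless it
is \<open>\<bottom>\<close>: descending through abstractions and function positions of a term without
approximants never meets \<open>\<bottom>\<close>, so it would produce an infinite branch that never enters an
argument position. Hence \<open>\<T>(\<lambda>x.P)\<close> determines \<open>\<T>(P)\<close>, and \<open>\<T>((P)Q)\<close> determines \<open>\<T>(P)\<close>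
and \<open>\<T>(Q)\<close> through the approximants \<open>\<langle>s\<rangle>[]\<close> and \<open>\<langle>s\<rangle>[t]\<close>; so two such terms with the same
Taylor expansion are bisimilar, i.e. equal.\<close>

lemma subterm_at_append:
  "subterm_at M (p @ q) = (case subterm_at M p of None \<Rightarrow> None | Some P \<Rightarrow> subterm_at P q)"
  by (induction p arbitrary: M) (auto split: option.splits)

lemma no_bot_redex_step:
  assumes "no_bot_redex M" and "step d M = Some P"
  shows "no_bot_redex P"
  unfolding no_bot_redex_def
proof
  fix p
  have "subterm_at M (d # p) = subterm_at P p"
    using assms(2) by simp
  then show "subterm_at P p \<noteq> Some (Lam Bot) \<and> (\<forall>Q. subterm_at P p \<noteq> Some (App Bot Q))"
    using assms(1) unfolding no_bot_redex_def by metis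
qed

lemma no_bot_redex_root:
  assumes "no_bot_redex M"
  shows "M \<noteq> Lam Bot" and "M \<noteq> App Bot Q"
  using assms unfolding no_bot_redex_def by (metis subterm_at.simps(1))+

lemma Lambda001_step:
  assumes "M \<in> Lambda001" and "step d M = Some P"
  shows "P \<in> Lambda001"
  unfolding Lambda001_def mem_Collect_eq
proof (intro allI impI)
  fix f assume f: "infinite_branch P f"
  have "infinite_branch M (case_nat d f)"
    unfolding infinite_branch_def
  proof
    fix n show "subterm_at M (map (case_nat d f) [0..<n]) \<noteq> None"
      using f assms(2) unfolding infinite_branch_def
      by (cases n) (simp_all add: map_upt_Suc del: upt_Suc)
  qed
  then have "infinite {i. case_nat d f i = DArg}"
    using assms(1) unfolding Lambda001_def by blast
  moreover have "{i. case_nat d f i = DArg} \<subseteq> insert 0 (Suc ` {i. f i = DArg})"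
  proof
    fix i assume "i \<in> {i. case_nat d f i = DArg}"
    then show "i \<in> insert 0 (Suc ` {i. f i = DArg})" by (cases i) auto
  qed
  ultimately show "infinite {i. f i = DArg}"
    using finite_subset by blast
qed

lemma infinite_branch_avoiding_DArg:
  assumes "Q M"
    and "\<And>M. Q M \<Longrightarrow> \<exists>d P. d \<noteq> DArg \<and> step d M = Some P \<and> Q P"
  obtains f where "infinite_branch M f" and "\<And>i. f i \<noteq> DArg"
proof -
  define descend where "descend M = (SOME (d, P). d \<noteq> DArg \<and> step d M = Some P \<and> Q P)" for M
  have descend_step:
    "fst (descend M) \<noteq> DArg \<and> step (fst (descend M)) M = Some (snd (descend M)) \<and> Q (snd (descend M))"
    if "Q M" for M
    using someI_ex[of "\<lambda>(d, P). d \<noteq> DArg \<and> step d M = Some P \<and> Q P"] assms(2)[OF that]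
    unfolding descend_def by auto
  define g where "g n = ((snd \<circ> descend) ^^ n) M" for n
  define f where "f n = fst (descend (g n))" for n
  have path: "Q (g n) \<and> subterm_at M (map f [0..<n]) = Some (g n)" for n
  proof (induction n)
    case 0
    then show ?case using assms(1) by (simp add: g_def)
  next
    case (Suc n)
    then show ?case
      using descend_step[of "g n"] by (simp add: g_def f_def subterm_at_append)
  qed
  then have "infinite_branch M f"
    unfolding infinite_branch_def by simp
  moreover have "f i \<noteq> DArg" for i
    using descend_step[of "g i"] path unfolding f_def by blast
  ultimately show thesis by (rule that)
qed

inductive_simps taylor_approx_Var_iff: "taylor_approx s (Var x)"
inductive_simps taylor_approx_Bot_iff: "taylor_approx s Bot"
inductive_simps taylor_approx_Lam_iff: "taylor_approx s (Lam P)"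
inductive_simps taylor_approx_App_iff: "taylor_approx s (App P Q)"

lemma taylor_Var: "taylor (Var x) = {RVar x}"
  and taylor_Bot: "taylor Bot = {}"
  and taylor_Lam: "taylor (Lam P) = RLam ` taylor P"
  and taylor_App: "taylor (App P Q) = {RApp s ts |s ts. s \<in> taylor P \<and> set_mset ts \<subseteq> taylor Q}"
  unfolding taylor_def
  by (auto simp: taylor_approx_Var_iff taylor_approx_Bot_iff taylor_approx_Lam_iff taylor_approx_App_iff)

lemma no_approximant_descend:
  assumes "no_bot_redex M" and "M \<noteq> Bot" and "taylor M = {}"
  shows "\<exists>d P. d \<noteq> DArg \<and> step d M = Some P \<and> no_bot_redex P \<and> P \<noteq> Bot \<and> taylor P = {}"
proof (cases M)
  case (Var x)
  then show ?thesis using assms(3) by (simp add: taylor_Var)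
next
  case Bot
  then show ?thesis using assms(2) by simp
next
  case (Lam P)
  then have "P \<noteq> Bot" and "no_bot_redex P" and "taylor P = {}"
    using assms no_bot_redex_root(1)[of M] no_bot_redex_step[of M DLam P]
    by (simp_all add: taylor_Lam)
  then show ?thesis using Lam by auto
next
  case (App P P')
  have "taylor P = {}"
  proof (rule ccontr)
    assume "taylor P \<noteq> {}"
    then obtain s where "s \<in> taylor P" by blast
    then have "RApp s {#} \<in> taylor M" using App by (simp add: taylor_App)
    then show False using assms(3) by simp
  qed
  moreover have "P \<noteq> Bot" and "no_bot_redex P"
    using assms App no_bot_redex_root(2)[of M P'] no_bot_redex_step[of M DFun P] by auto
  ultimately show ?thesis using App by auto
qed

lemma taylor_nonempty:
  assumes "M \<in> Lambda001" and "no_bot_redex M" and "M \<noteq> Bot"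
  shows "taylor M \<noteq> {}"
proof
  assume "taylor M = {}"
  then obtain f where "infinite_branch M f" and "\<And>i. f i \<noteq> DArg"
    using infinite_branch_avoiding_DArg[of "\<lambda>M. no_bot_redex M \<and> M \<noteq> Bot \<and> taylor M = {}" M]
      no_approximant_descend assms(2,3) by blast
  moreover from \<open>\<And>i. f i \<noteq> DArg\<close> have "{i. f i = DArg} = {}"
    by simp
  ultimately show False
    using assms(1) unfolding Lambda001_def by force
qed

lemma taylor_Var_eq:
  assumes "taylor (Var x) = taylor N"
  shows "N = Var x"
  using assms by (cases N) (auto simp: taylor_Var taylor_Bot taylor_Lam taylor_App)

lemma taylor_Lam_eq:
  assumes eq: "taylor (Lam P) = taylor N" and "s \<in> taylor P"
  obtains Q where "N = Lam Q" and "taylor P = taylor Q"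
proof -
  have "RLam s \<in> taylor N"
    using assms by (simp add: taylor_Lam flip: eq)
  then obtain Q where N: "N = Lam Q"
    by (cases N) (auto simp: taylor_Var taylor_Bot taylor_App)
  then have "taylor P = taylor Q"
    using eq by (simp add: taylor_Lam inj_image_eq_iff inj_def)
  with N show thesis by (rule that)
qed

lemma taylor_App_eq:
  assumes eq: "taylor (App P P') = taylor N" and "s \<in> taylor P"
  obtains Q Q' where "N = App Q Q'" and "taylor P = taylor Q" and "taylor P' = taylor Q'"
proof -
  have "RApp s {#} \<in> taylor N"
    using assms by (simp add: taylor_App flip: eq)
  then obtain Q Q' where N: "N = App Q Q'"
    by (cases N) (auto simp: taylor_Var taylor_Bot taylor_Lam)
  have app_iff: "s \<in> taylor P \<and> set_mset ts \<subseteq> taylor P' \<longleftrightarrow> s \<in> taylor Q \<and> set_mset ts \<subseteq> taylor Q'"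
    for s ts
  proof -
    have "RApp s ts \<in> taylor (App P P') \<longleftrightarrow> RApp s ts \<in> taylor (App Q Q')"
      using eq N by simp
    then show ?thesis by (simp add: taylor_App)
  qed
  have "taylor P = taylor Q"
    using app_iff[of _ "{#}"] by auto
  moreover have "taylor P' = taylor Q'"
    using app_iff[of s "{#_#}"] \<open>s \<in> taylor P\<close> \<open>taylor P = taylor Q\<close> by auto
  ultimately show thesis using N that by blast
qed

lemma taylor_eq_cases:
  assumes "M \<in> Lambda001" and "N \<in> Lambda001" and "no_bot_redex M" and "no_bot_redex N"
    and eq: "taylor M = taylor N"
  obtains (Var) x where "M = Var x" and "N = Var x"
  | (Bot) "M = Bot" and "N = Bot"
  | (Lam) P Q where "M = Lam P" and "N = Lam Q" and "taylor P = taylor Q"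
  | (App) P P' Q Q' where "M = App P P'" and "N = App Q Q'"
      and "taylor P = taylor Q" and "taylor P' = taylor Q'"
proof (cases M)
  case (Var x)
  then show thesis using taylor_Var_eq eq that(1) by simp
next
  case Bot
  then show thesis using taylor_nonempty[of N] assms that(2) by (auto simp: taylor_Bot)
next
  case (Lam P)
  then have "step DLam M = Some P" and "P \<noteq> Bot"
    using no_bot_redex_root(1) assms(3) by auto
  then have "taylor P \<noteq> {}"
    using taylor_nonempty Lambda001_step[OF assms(1)] no_bot_redex_step[OF assms(3)] by blast
  then obtain s where "s \<in> taylor P" by blast
  then obtain Q where "N = Lam Q" "taylor P = taylor Q"
    using taylor_Lam_eq[of P N s] eq Lam by blast
  then show thesis using Lam that(3) by blast
next
  case (App P P')
  then have "step DFun M = Some P" and "P \<noteq> Bot"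
    using no_bot_redex_root(2) assms(3) by auto
  then have "taylor P \<noteq> {}"
    using taylor_nonempty Lambda001_step[OF assms(1)] no_bot_redex_step[OF assms(3)] by blast
  then obtain s where "s \<in> taylor P" by blast
  then obtain Q Q' where "N = App Q Q'" "taylor P = taylor Q" "taylor P' = taylor Q'"
    using taylor_App_eq[of P P' N s] eq App by blast
  then show thesis using App that(4) by blast
qed

theorem mainTheorem14:
  assumes "M \<in> Lambda001" and "N \<in> Lambda001"
    and "no_bot_redex M" and "no_bot_redex N"
    and "taylor M = taylor N"
  shows "M = N"
  using assms
proof (coinduction arbitrary: M N rule: lterm.coinduct)
  case (Eq_lterm M N)
  have subterm: "P \<in> Lambda001 \<and> no_bot_redex P"
    if "step d K = Some P" and "K \<in> {M, N}" for K d P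
    using that Eq_lterm Lambda001_step no_bot_redex_step by blast
  from Eq_lterm show ?case
  proof (cases rule: taylor_eq_cases)
    case (Lam P Q)
    then show ?thesis
      using subterm[where d = DLam and K = M] subterm[where d = DLam and K = N] by auto
  next
    case (App P P' Q Q')
    then show ?thesis
      using subterm[where d = DFun and K = M] subterm[where d = DFun and K = N]
        subterm[where d = DArg and K = M] subterm[where d = DArg and K = N] by auto
  qed auto
qed

end
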